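(* Let $T \in \mathbb{R}^{n_1} \otimes \mathbb{R}^{n_2} \otimes \mathbb{R}^{n_3}$ be a tensor with $Q(T) \geq r$. Then there exist linear maps $\pi_2 : \mathbb{R}^{n_2} \to \mathbb{R}^r$ and $\pi_3 : \mathbb{R}^{n_3} \to \mathbb{R}^r$ such that the slices $\tilde T_1,\ldots,\tilde T_{n_1} \in \mathbb{R}^r \otimes \mathbb{R}^r$ of $(\mathrm{id} \otimes \pi_2 \otimes \pi_3)T$ along the first axis satisfy \[ \#\big( \mathbb{P}\langle \tilde T_1,\ldots,\tilde T_{n_1}\rangle \cap \Sigma_{r,r} \big) \geq r. \]
   Context: For $r \geq 0$ let $I_r := \sum_{j=1}^r e_j \otimes e_j \otimes e_j$. The subrank of $T$ is $Q(T) := \max\{ r \mid \exists\ \mathbb{R}\text{-linear } \varphi_i : \mathbb{R}^{n_i} \to \mathbb{R}^r,\ (\varphi_1 \otimes \varphi_2 \otimes \varphi_3) T = I_r\}$. The slices of $S \in \mathbb{R}^{n_1}\otimes\mathbb{R}^{a}\otimes\mathbb{R}^{b}$ along the first axis are the $S_1,\ldots,S_{n_1}\in \mathbb{R}^a\otimes\mathbb{R}^b$ with $S = \sum_i e_i \otimes S_i$. $\mathbb{P}\langle \cdot \rangle$ denotes the projectivization of the real linear span, and $\Sigma_{r,r} := \{[A] \in \mathbb{P}(\mathbb{R}^r \otimes \mathbb{R}^r) \mid A \text{ has rank } 1\}$ is the real Segre variety of rank-one $r\times r$ matrices; $\#$ denotes cardinality. *)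

theory Defs
  imports "HOL-Analysis.Analysis"
begin

text \<open>A tensor in R^n1 (x) R^n2 (x) R^n3 is a function T :: nat => nat => nat => real,
 only the entries with i < n1, j < n2, k < n3 being relevant. A linear map R^n -> R^m is given by its
 m x n matrix M :: nat => nat => real (entry M a i, a < m, i < n).
 An r x r matrix is a function nat => nat => real, only entries below r relevant.\<close>

definition apply3 ::
  "nat \<Rightarrow> nat \<Rightarrow> nat \<Rightarrow> (nat \<Rightarrow> nat \<Rightarrow> real) \<Rightarrow> (nat \<Rightarrow> nat \<Rightarrow> real) \<Rightarrow> (nat \<Rightarrow> nat \<Rightarrow> real)
   \<Rightarrow> (nat \<Rightarrow> nat \<Rightarrow> nat \<Rightarrow> real) \<Rightarrow> nat \<Rightarrow> nat \<Rightarrow> nat \<Rightarrow> real" where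
  "apply3 n1 n2 n3 A B C T = (\<lambda>a b c. \<Sum>i<n1. \<Sum>j<n2. \<Sum>k<n3. A a i * B b j * C c k * T i j k)"

definition unit_tensor :: "nat \<Rightarrow> nat \<Rightarrow> nat \<Rightarrow> real" where
  "unit_tensor a b c = (if a = b \<and> b = c then 1 else 0)"

definition restricts_to_unit ::
  "nat \<Rightarrow> nat \<Rightarrow> nat \<Rightarrow> (nat \<Rightarrow> nat \<Rightarrow> nat \<Rightarrow> real) \<Rightarrow> nat \<Rightarrow> bool" where
  "restricts_to_unit n1 n2 n3 T r \<longleftrightarrow>
     (\<exists>A B C. \<forall>a<r. \<forall>b<r. \<forall>c<r. apply3 n1 n2 n3 A B C T a b c = unit_tensor a b c)"

definition subrank :: "nat \<Rightarrow> nat \<Rightarrow> nat \<Rightarrow> (nat \<Rightarrow> nat \<Rightarrow> nat \<Rightarrow> real) \<Rightarrow> nat" where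
  "subrank n1 n2 n3 T = Max {r. restricts_to_unit n1 n2 n3 T r}"

definition slices ::
  "nat \<Rightarrow> nat \<Rightarrow> nat \<Rightarrow> (nat \<Rightarrow> nat \<Rightarrow> real) \<Rightarrow> (nat \<Rightarrow> nat \<Rightarrow> real)
   \<Rightarrow> (nat \<Rightarrow> nat \<Rightarrow> nat \<Rightarrow> real) \<Rightarrow> nat \<Rightarrow> nat \<Rightarrow> nat \<Rightarrow> real" where
  "slices r n2 n3 P2 P3 T = (\<lambda>i b c. if b < r \<and> c < r then
      (\<Sum>j<n2. \<Sum>k<n3. P2 b j * P3 c k * T i j k) else 0)"

definition sqmats :: "nat \<Rightarrow> (nat \<Rightarrow> nat \<Rightarrow> real) set" where
  "sqmats r = {M. \<forall>b c. \<not> (b < r \<and> c < r) \<longrightarrow> M b c = 0}"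

definition mat_span :: "nat \<Rightarrow> (nat \<Rightarrow> nat \<Rightarrow> nat \<Rightarrow> real) \<Rightarrow> (nat \<Rightarrow> nat \<Rightarrow> real) set" where
  "mat_span n S = {(\<lambda>b c. \<Sum>i<n. x i * S i b c) | x. True}"

definition rank_one :: "nat \<Rightarrow> (nat \<Rightarrow> nat \<Rightarrow> real) \<Rightarrow> bool" where
  "rank_one r M \<longleftrightarrow> (\<exists>b<r. \<exists>c<r. M b c \<noteq> 0) \<and>
     (\<exists>u v :: nat \<Rightarrow> real. \<forall>b<r. \<forall>c<r. M b c = u b * v c)"

definition proj_point :: "(nat \<Rightarrow> nat \<Rightarrow> real) \<Rightarrow> (nat \<Rightarrow> nat \<Rightarrow> real) set" where
  "proj_point M = {(\<lambda>b c. t * M b c) | t. t \<noteq> 0}"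

text \<open>P<S_1..S_n> \<inter> Sigma_{r,r}: projective points of rank-one r x r matrices in the span.\<close>
definition proj_rank_one_points ::
  "nat \<Rightarrow> nat \<Rightarrow> (nat \<Rightarrow> nat \<Rightarrow> nat \<Rightarrow> real) \<Rightarrow> (nat \<Rightarrow> nat \<Rightarrow> real) set set" where
  "proj_rank_one_points r n S =
     proj_point ` {M \<in> mat_span n S \<inter> sqmats r. rank_one r M}"

end

theory Submission
  imports Defs
begin

(* Let phi1, phi2, phi3 restrict T to the unit tensor I_r and take pi2 = phi2, pi3 = phi3.
   Combining the slices of (id (x) phi2 (x) phi3) T with the coefficients of the a-th row of
   phi1 gives the a-th slice of (phi1 (x) phi2 (x) phi3) T = I_r, the matrix unit e_a (x) e_a.
   These r matrix units lie in the span, have rank one and are pairwise non-proportional. *)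

lemma restricts_to_unit_mono:
  assumes "restricts_to_unit n1 n2 n3 T r'" and "r \<le> r'"
  shows "restricts_to_unit n1 n2 n3 T r"
  using assms unfolding restricts_to_unit_def by (meson order_less_le_trans)

lemma restricts_to_unit_if_le_subrank:
  assumes "r \<le> subrank n1 n2 n3 T"
  shows "restricts_to_unit n1 n2 n3 T r"
proof -
  let ?R = "{r. restricts_to_unit n1 n2 n3 T r}"
  have "\<exists>r'\<ge>r. r' \<in> ?R"
  proof (cases "finite ?R")
    case True
    have "0 \<in> ?R" unfolding restricts_to_unit_def by simp
    then have "subrank n1 n2 n3 T \<in> ?R"
      unfolding subrank_def using Max_in[OF True] by blast
    then show ?thesis using assms by blast
  next
    case False
    then show ?thesis by (simp add: infinite_nat_iff_unbounded_le)
  qed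
  then show ?thesis using restricts_to_unit_mono by blast
qed

lemma sum_slices_eq_apply3:
  assumes "b < r" and "c < r"
  shows "(\<Sum>i<n1. A a i * slices r n2 n3 B C T i b c) = apply3 n1 n2 n3 A B C T a b c"
  using assms unfolding slices_def apply3_def by (simp add: sum_distrib_left mult.assoc)

lemma unit_tensor_slice_in_mat_span:
  assumes unit: "\<forall>a<r. \<forall>b<r. \<forall>c<r. apply3 n1 n2 n3 A B C T a b c = unit_tensor a b c"
    and "a < r"
  shows "unit_tensor a \<in> mat_span n1 (slices r n2 n3 B C T)"
proof -
  have "unit_tensor a = (\<lambda>b c. \<Sum>i<n1. A a i * slices r n2 n3 B C T i b c)"
  proof (intro ext)
    fix b c
    show "unit_tensor a b c = (\<Sum>i<n1. A a i * slices r n2 n3 B C T i b c)"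
    proof (cases "b < r \<and> c < r")
      case True
      then show ?thesis using unit \<open>a < r\<close> by (simp add: sum_slices_eq_apply3)
    next
      case False
      then show ?thesis using \<open>a < r\<close> unfolding slices_def unit_tensor_def by auto
    qed
  qed
  then show ?thesis unfolding mat_span_def by blast
qed

lemma unit_tensor_slice_in_sqmats:
  "a < r \<Longrightarrow> unit_tensor a \<in> sqmats r"
  unfolding sqmats_def unit_tensor_def by auto

lemma rank_one_unit_tensor_slice:
  assumes "a < r"
  shows "rank_one r (unit_tensor a)"
  unfolding rank_one_def unit_tensor_def using assms
  by (intro conjI exI[of _ "\<lambda>b. if b = a then 1 else 0"]) auto

lemma self_in_proj_point: "M \<in> proj_point M"
  unfolding proj_point_def by (intro CollectI exI[of _ 1]) simp

lemma inj_proj_point_unit_tensor: "inj (\<lambda>a. proj_point (unit_tensor a))"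
proof (rule injI)
  fix a a' assume "proj_point (unit_tensor a) = proj_point (unit_tensor a')"
  then have "unit_tensor a \<in> proj_point (unit_tensor a')"
    using self_in_proj_point by metis
  then obtain t where "unit_tensor a = (\<lambda>b c. t * unit_tensor a' b c)"
    unfolding proj_point_def by blast
  then have "unit_tensor a a a = t * unit_tensor a' a a" by metis
  then show "a = a'" unfolding unit_tensor_def by (auto split: if_splits)
qed

theorem lemma4p8:
  fixes n1 n2 n3 r :: nat and T :: "nat \<Rightarrow> nat \<Rightarrow> nat \<Rightarrow> real"
  assumes "subrank n1 n2 n3 T \<ge> r"
  shows "\<exists>P2 P3 :: nat \<Rightarrow> nat \<Rightarrow> real.
           \<exists>F \<subseteq> proj_rank_one_points r n1 (slices r n2 n3 P2 P3 T). finite F \<and> card F = r"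
proof -
  obtain A B C where unit: "\<forall>a<r. \<forall>b<r. \<forall>c<r. apply3 n1 n2 n3 A B C T a b c = unit_tensor a b c"
    using restricts_to_unit_if_le_subrank[OF assms] unfolding restricts_to_unit_def by blast
  let ?F = "(\<lambda>a. proj_point (unit_tensor a)) ` {..<r}"
  have "?F \<subseteq> proj_rank_one_points r n1 (slices r n2 n3 B C T)"
    unfolding proj_rank_one_points_def
    using unit_tensor_slice_in_mat_span[OF unit] unit_tensor_slice_in_sqmats
      rank_one_unit_tensor_slice by blast
  moreover have "card ?F = r"
    using card_image[OF inj_on_subset[OF inj_proj_point_unit_tensor]] by simp
  ultimately show ?thesis by blast
qed

end
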